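(* Let $\mathcal E$ be an environment and $t_0,t_1$ closed terms with $t_0\approx_{\mathcal E}t_1$. Then for every closed evaluation context $F$, $F[t_0]\approx_{\mathcal E}F[t_1]$.
   Context: Terms of $\lambda_S$: $t ::= x \mid \lambda x.t \mid t\,t \mid \mathcal{S}k.t \mid \langle t\rangle$ (shift binds $k$; $\langle\cdot\rangle$ reset), up to $\alpha$-conversion. Values $v::=\lambda x.t$. Pure contexts $E ::= \Box \mid v\,E \mid E\,t$; evaluation contexts $F ::= \Box \mid v\,F \mid F\,t \mid \langle F\rangle$. Reduction: $F[(\lambda x.t)v]\to F[t\{v/x\}]$; $F[\langle E[\mathcal Sk.t]\rangle]\to F[\langle t\{\lambda x.\langle E[x]\rangle/k\}\rangle]$ ($x\notin\mathrm{fv}(E)$); $F[\langle v\rangle]\to F[v]$; $\to^*$ reflexive-transitive closure. Stuck term: not a value and irreducible; normal form: value or stuck term. Closures: for $R$ a relation on closed terms, $\widetilde R$ is the smallest relation containing $R$, all $(x,x)$, closed under all term constructors, restricted to closed terms; $\widehat R$ is the smallest relation on closed evaluation contexts with $\Box\widehat R\Box$, $v_0F_0\widehat Rv_1F_1$ if $F_0\widehat RF_1,v_0\widetilde Rv_1$; $F_0t_0\widehat RF_1t_1$ if $F_0\widehat RF_1,t_0\widetilde Rt_1$; $\langle F_0\rangle\widehat R\langle F_1\rangle$ if $F_0\widehat RF_1$. Environmental bisimilarity: an environment $\mathcal E$ is a relation on closed normal forms relating values only with values and stuck terms only with stuck terms; an environmental relation $\mathcal X$ is a set of environments and triples $(\mathcal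 E,t_0,t_1)$ with $t_0,t_1$ closed, written $t_0\mathcal X_{\mathcal E}t_1$. $\mathcal X$ is an environmental bisimulation if (1) whenever $t_0\mathcal X_{\mathcal E}t_1$: (a) $t_0\to t_0'$ implies $t_1\to^*t_1'$ with $t_0'\mathcal X_{\mathcal E}t_1'$; (b) if $t_0$ is a value $v_0$ then $t_1\to^*v_1$, a value, with $\mathcal E\cup\{(v_0,v_1)\}\in\mathcal X$; (c) if $t_0$ is stuck then $t_1\to^*t_1'$ stuck with $\mathcal E\cup\{(t_0,t_1')\}\in\mathcal X$; (d) symmetric conditions for $t_1$; (2) whenever $\mathcal E\in\mathcal X$: (a) $(\lambda x.t_0)\mathcal E(\lambda x.t_1)$ and $v_0\widetilde{\mathcal E}v_1$ imply $t_0\{v_0/x\}\mathcal X_{\mathcal E}t_1\{v_1/x\}$; (b) $E_0[\mathcal Sk.t_0]\mathcal EE_1[\mathcal Sk.t_1]$ and pure $E_0'\widehat{\mathcal E}E_1'$ imply $\langle t_0\{\lambda x.\langle E_0'[E_0[x]]\rangle/k\}\rangle\mathcal X_{\mathcal E}\langle t_1\{\lambda x.\langle E_1'[E_1[x]]\rangle/k\}\rangle$, $x$ fresh. $\approx$ is the largest environmental bisimulation; $t_0\approx_{\mathcal E}t_1$ means $(\mathcal E,t_0,t_1)\in\approx$. *)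

theory Defs
  imports Main
begin

text \<open>Lam t binds index 0 in t; Shift t binds the continuation variable k as index 0 in t;
  Reset t is the delimiter.\<close>

datatype trm = Var nat | Lam trm | App trm trm | Shift trm | Reset trm

fun is_value :: "trm \<Rightarrow> bool" where
  "is_value (Lam t) = True"
| "is_value _ = False"

fun closed_at :: "nat \<Rightarrow> trm \<Rightarrow> bool" where
  "closed_at n (Var i) = (i < n)"
| "closed_at n (Lam t) = closed_at (Suc n) t"
| "closed_at n (App s t) = (closed_at n s \<and> closed_at n t)"
| "closed_at n (Shift t) = closed_at (Suc n) t"
| "closed_at n (Reset t) = closed_at n t"

definition closed :: "trm \<Rightarrow> bool" where
  "closed t \<longleftrightarrow> closed_at 0 t"

fun lift :: "nat \<Rightarrow> trm \<Rightarrow> trm" where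
  "lift k (Var i) = (if i < k then Var i else Var (Suc i))"
| "lift k (Lam t) = Lam (lift (Suc k) t)"
| "lift k (App s t) = App (lift k s) (lift k t)"
| "lift k (Shift t) = Shift (lift (Suc k) t)"
| "lift k (Reset t) = Reset (lift k t)"

fun subst :: "trm \<Rightarrow> nat \<Rightarrow> trm \<Rightarrow> trm" where
  "subst (Var i) k s = (if i < k then Var i else if i = k then s else Var (i - 1))"
| "subst (Lam t) k s = Lam (subst t (Suc k) (lift 0 s))"
| "subst (App t u) k s = App (subst t k s) (subst u k s)"
| "subst (Shift t) k s = Shift (subst t (Suc k) (lift 0 s))"
| "subst (Reset t) k s = Reset (subst t k s)"

datatype ctx = Hole | CAppR trm ctx | CAppL ctx trm | CReset ctx

fun plug :: "ctx \<Rightarrow> trm \<Rightarrow> trm" where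
  "plug Hole t = t"
| "plug (CAppR v F) t = App v (plug F t)"
| "plug (CAppL F u) t = App (plug F t) u"
| "plug (CReset F) t = Reset (plug F t)"

fun eval_ctx :: "ctx \<Rightarrow> bool" where
  "eval_ctx Hole = True"
| "eval_ctx (CAppR v F) = (is_value v \<and> eval_ctx F)"
| "eval_ctx (CAppL F u) = eval_ctx F"
| "eval_ctx (CReset F) = eval_ctx F"

fun pure_ctx :: "ctx \<Rightarrow> bool" where
  "pure_ctx Hole = True"
| "pure_ctx (CAppR v F) = (is_value v \<and> pure_ctx F)"
| "pure_ctx (CAppL F u) = pure_ctx F"
| "pure_ctx (CReset F) = False"

fun closed_ctx :: "ctx \<Rightarrow> bool" where
  "closed_ctx Hole = True"
| "closed_ctx (CAppR v F) = (closed v \<and> closed_ctx F)"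
| "closed_ctx (CAppL F u) = (closed_ctx F \<and> closed u)"
| "closed_ctx (CReset F) = closed_ctx F"

fun lift_ctx :: "nat \<Rightarrow> ctx \<Rightarrow> ctx" where
  "lift_ctx k Hole = Hole"
| "lift_ctx k (CAppR v F) = CAppR (lift k v) (lift_ctx k F)"
| "lift_ctx k (CAppL F u) = CAppL (lift_ctx k F) (lift k u)"
| "lift_ctx k (CReset F) = CReset (lift_ctx k F)"

inductive step :: "trm \<Rightarrow> trm \<Rightarrow> bool" where
  beta: "eval_ctx F \<Longrightarrow> is_value v \<Longrightarrow>
     step (plug F (App (Lam t) v)) (plug F (subst t 0 v))"
| shift: "eval_ctx F \<Longrightarrow> pure_ctx E \<Longrightarrow>
     step (plug F (Reset (plug E (Shift t))))
          (plug F (Reset (subst t 0 (Lam (Reset (plug (lift_ctx 0 E) (Var 0)))))))"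
| reset: "eval_ctx F \<Longrightarrow> is_value v \<Longrightarrow>
     step (plug F (Reset v)) (plug F v)"

abbreviation steps :: "trm \<Rightarrow> trm \<Rightarrow> bool" where
  "steps \<equiv> step\<^sup>*\<^sup>*"

definition stuck :: "trm \<Rightarrow> bool" where
  "stuck t \<longleftrightarrow> \<not> is_value t \<and> (\<nexists>t'. step t t')"

definition normal_form :: "trm \<Rightarrow> bool" where
  "normal_form t \<longleftrightarrow> is_value t \<or> stuck t"

inductive tilde_cl :: "(trm \<times> trm) set \<Rightarrow> trm \<Rightarrow> trm \<Rightarrow> bool" for R where
  base: "(s, t) \<in> R \<Longrightarrow> tilde_cl R s t"
| var: "tilde_cl R (Var n) (Var n)"
| lam: "tilde_cl R s t \<Longrightarrow> tilde_cl R (Lam s) (Lam t)"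
| app: "tilde_cl R s1 t1 \<Longrightarrow> tilde_cl R s2 t2 \<Longrightarrow> tilde_cl R (App s1 s2) (App t1 t2)"
| shift: "tilde_cl R s t \<Longrightarrow> tilde_cl R (Shift s) (Shift t)"
| reset: "tilde_cl R s t \<Longrightarrow> tilde_cl R (Reset s) (Reset t)"

definition tilde :: "(trm \<times> trm) set \<Rightarrow> (trm \<times> trm) set" where
  "tilde R = {(s, t). tilde_cl R s t \<and> closed s \<and> closed t}"

inductive hat_cl :: "(trm \<times> trm) set \<Rightarrow> ctx \<Rightarrow> ctx \<Rightarrow> bool" for R where
  hole: "hat_cl R Hole Hole"
| appR: "hat_cl R F0 F1 \<Longrightarrow> is_value v0 \<Longrightarrow> is_value v1 \<Longrightarrow> (v0, v1) \<in> tilde R \<Longrightarrow>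
     hat_cl R (CAppR v0 F0) (CAppR v1 F1)"
| appL: "hat_cl R F0 F1 \<Longrightarrow> (t0, t1) \<in> tilde R \<Longrightarrow>
     hat_cl R (CAppL F0 t0) (CAppL F1 t1)"
| reset: "hat_cl R F0 F1 \<Longrightarrow> hat_cl R (CReset F0) (CReset F1)"

definition hat :: "(trm \<times> trm) set \<Rightarrow> (ctx \<times> ctx) set" where
  "hat R = {(F0, F1). hat_cl R F0 F1 \<and> eval_ctx F0 \<and> eval_ctx F1
                     \<and> closed_ctx F0 \<and> closed_ctx F1}"

definition is_env :: "(trm \<times> trm) set \<Rightarrow> bool" where
  "is_env \<E> \<longleftrightarrow> (\<forall>(s, t) \<in> \<E>. closed s \<and> closed t \<and> normal_form s \<and> normal_form t
                    \<and> (is_value s \<longleftrightarrow> is_value t) \<and> (stuck s \<longleftrightarrow> stuck t))"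

datatype elem = Env "(trm \<times> trm) set" | Tri "(trm \<times> trm) set" trm trm

definition env_relation :: "elem set \<Rightarrow> bool" where
  "env_relation X \<longleftrightarrow>
     (\<forall>\<E>. Env \<E> \<in> X \<longrightarrow> is_env \<E>) \<and>
     (\<forall>\<E> t0 t1. Tri \<E> t0 t1 \<in> X \<longrightarrow> is_env \<E> \<and> closed t0 \<and> closed t1)"

definition prog_cond :: "elem set \<Rightarrow> (trm \<times> trm) set \<Rightarrow> trm \<Rightarrow> trm \<Rightarrow> bool" where
  "prog_cond X \<E> t0 t1 \<longleftrightarrow>
     (\<forall>t0'. step t0 t0' \<longrightarrow> (\<exists>t1'. steps t1 t1' \<and> Tri \<E> t0' t1' \<in> X)) \<and>
     (is_value t0 \<longrightarrow> (\<exists>v1. steps t1 v1 \<and> is_value v1 \<and> Env (\<E> \<union> {(t0, v1)}) \<in> X)) \<and>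
     (stuck t0 \<longrightarrow> (\<exists>t1'. steps t1 t1' \<and> stuck t1' \<and> Env (\<E> \<union> {(t0, t1')}) \<in> X))"

definition prog_cond_rev :: "elem set \<Rightarrow> (trm \<times> trm) set \<Rightarrow> trm \<Rightarrow> trm \<Rightarrow> bool" where
  "prog_cond_rev X \<E> t0 t1 \<longleftrightarrow>
     (\<forall>t1'. step t1 t1' \<longrightarrow> (\<exists>t0'. steps t0 t0' \<and> Tri \<E> t0' t1' \<in> X)) \<and>
     (is_value t1 \<longrightarrow> (\<exists>v0. steps t0 v0 \<and> is_value v0 \<and> Env (\<E> \<union> {(v0, t1)}) \<in> X)) \<and>
     (stuck t1 \<longrightarrow> (\<exists>t0'. steps t0 t0' \<and> stuck t0' \<and> Env (\<E> \<union> {(t0', t1)}) \<in> X))"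

definition env_bisim :: "elem set \<Rightarrow> bool" where
  "env_bisim X \<longleftrightarrow> env_relation X \<and>
     (\<forall>\<E> t0 t1. Tri \<E> t0 t1 \<in> X \<longrightarrow> prog_cond X \<E> t0 t1 \<and> prog_cond_rev X \<E> t0 t1) \<and>
     (\<forall>\<E>. Env \<E> \<in> X \<longrightarrow>
        (\<forall>t0 t1 v0 v1. (Lam t0, Lam t1) \<in> \<E> \<longrightarrow> is_value v0 \<longrightarrow> is_value v1 \<longrightarrow>
            (v0, v1) \<in> tilde \<E> \<longrightarrow> Tri \<E> (subst t0 0 v0) (subst t1 0 v1) \<in> X) \<and>
        (\<forall>E0 E1 t0 t1 E0' E1'. pure_ctx E0 \<longrightarrow> pure_ctx E1 \<longrightarrow>
            (plug E0 (Shift t0), plug E1 (Shift t1)) \<in> \<E> \<longrightarrow>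
            pure_ctx E0' \<longrightarrow> pure_ctx E1' \<longrightarrow> (E0', E1') \<in> hat \<E> \<longrightarrow>
            Tri \<E>
              (Reset (subst t0 0 (Lam (Reset (plug (lift_ctx 0 E0') (plug (lift_ctx 0 E0) (Var 0)))))))
              (Reset (subst t1 0 (Lam (Reset (plug (lift_ctx 0 E1') (plug (lift_ctx 0 E1) (Var 0)))))))
            \<in> X))"

definition env_bisimilarity :: "elem set" where
  "env_bisimilarity = \<Union>{X. env_bisim X}"

definition approx_in :: "(trm \<times> trm) set \<Rightarrow> trm \<Rightarrow> trm \<Rightarrow> bool" where
  "approx_in \<E> t0 t1 \<longleftrightarrow> Tri \<E> t0 t1 \<in> env_bisimilarity"

end

theory Submission
  imports Defs
begin

text \<open>Let \<open>C\<close> consist of the triples \<open>(\<E>, F0[s0], F1[s1])\<close> with \<open>s0 \<approx>\<^bsub>\<E>'\<^esub> s1\<close> and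
  \<open>F0\<close> related to \<open>F1\<close> by \<open>hat \<E>'\<close>, of the triples \<open>(\<E>, u0, u1)\<close> with \<open>u0\<close> related to \<open>u1\<close>
  by \<open>tilde \<E>'\<close> for an environment \<open>\<E>'\<close> of \<open>\<approx>\<close>, and of the environments \<open>\<E>\<close> themselves,
  where always \<open>\<E> \<subseteq> tilde \<E>'\<close>. Then \<open>C\<close> is an environmental bisimulation containing
  \<open>(\<E>, F[t0], F[t1])\<close>. Reduction is deterministic, so \<open>F0[s0]\<close> steps as \<open>s0\<close> does until \<open>s0\<close>
  is a normal form; then \<open>s0\<close> and the answer of \<open>s1\<close> join the environment of \<open>\<approx>\<close>, and the two
  sides become related by \<open>tilde\<close>. Reductions of terms related by \<open>tilde\<close> are matched by
  induction on the closure: a pair of the environment takes part in a redex only as a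
  \<open>\<lambda>\<close>-abstraction applied to a value or as a stuck term \<open>E[Shift t]\<close> under a reset, which are
  exactly clauses (2a) and (2b), the captured pure contexts accumulating in the outer contexts
  related by \<open>hat\<close>.\<close>

lemma closed_at_mono: "closed_at n t \<Longrightarrow> n \<le> m \<Longrightarrow> closed_at m t"
  by (induction n t arbitrary: m rule: closed_at.induct) auto

lemma lift_closed_at: "closed_at n t \<Longrightarrow> n \<le> k \<Longrightarrow> lift k t = t"
  by (induction t arbitrary: n k) auto

lemma subst_closed_at: "closed_at n t \<Longrightarrow> n \<le> k \<Longrightarrow> subst t k s = t"
  by (induction t arbitrary: n k s) auto

lemma closed_at_lift: "closed_at n s \<Longrightarrow> closed_at (Suc n) (lift k s)"
  by (induction s arbitrary: n k) auto

lemma closed_at_subst: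
  "closed_at (Suc n) t \<Longrightarrow> k \<le> n \<Longrightarrow> closed_at n s \<Longrightarrow> closed_at n (subst t k s)"
  by (induction t arbitrary: n k s) (auto simp: closed_at_lift)

lemma lift_closed: "closed t \<Longrightarrow> lift k t = t"
  unfolding closed_def using lift_closed_at by blast

lemma subst_closed: "closed t \<Longrightarrow> subst t k s = t"
  unfolding closed_def using subst_closed_at by blast

lemma lift_ctx_closed: "closed_ctx F \<Longrightarrow> lift_ctx k F = F"
  by (induction F) (auto simp: lift_closed)

lemma closed_at_plug: "closed_ctx F \<Longrightarrow> closed_at n t \<Longrightarrow> closed_at n (plug F t)"
  by (induction F) (auto simp: closed_def intro: closed_at_mono)

lemma closed_plug: "closed_ctx F \<Longrightarrow> closed t \<Longrightarrow> closed (plug F t)"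
  using closed_at_plug closed_def by auto

fun ctx_comp :: "ctx \<Rightarrow> ctx \<Rightarrow> ctx" where
  "ctx_comp Hole G = G"
| "ctx_comp (CAppR v F) G = CAppR v (ctx_comp F G)"
| "ctx_comp (CAppL F u) G = CAppL (ctx_comp F G) u"
| "ctx_comp (CReset F) G = CReset (ctx_comp F G)"

lemma plug_ctx_comp [simp]: "plug (ctx_comp F G) t = plug F (plug G t)"
  by (induction F) auto

lemma eval_ctx_comp [simp]: "eval_ctx (ctx_comp F G) \<longleftrightarrow> eval_ctx F \<and> eval_ctx G"
  by (induction F) auto

lemma pure_ctx_comp [simp]: "pure_ctx (ctx_comp F G) \<longleftrightarrow> pure_ctx F \<and> pure_ctx G"
  by (induction F) auto

lemma closed_ctx_comp [simp]: "closed_ctx (ctx_comp F G) \<longleftrightarrow> closed_ctx F \<and> closed_ctx G"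
  by (induction F) auto

lemma lift_ctx_comp [simp]: "lift_ctx k (ctx_comp F G) = ctx_comp (lift_ctx k F) (lift_ctx k G)"
  by (induction F) auto

text \<open>\<open>shift_reduct E' E t\<close> is \<open>\<langle>t{\<lambda>x.\<langle>E'[E[x]]\<rangle>/k}\<rangle>\<close>, the reduct of \<open>\<langle>E'[E[Shift t]]\<rangle>\<close>
  and the term produced by clause (2b).\<close>
definition shift_reduct :: "ctx \<Rightarrow> ctx \<Rightarrow> trm \<Rightarrow> trm" where
  "shift_reduct E' E t =
     Reset (subst t 0 (Lam (Reset (plug (lift_ctx 0 E') (plug (lift_ctx 0 E) (Var 0))))))"

lemma shift_reduct_comp: "shift_reduct E' (ctx_comp G E) t = shift_reduct (ctx_comp E' G) E t"
  by (simp add: shift_reduct_def)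

lemma closed_shift_reduct:
  "closed_at 1 t \<Longrightarrow> closed_ctx E' \<Longrightarrow> closed_ctx E \<Longrightarrow> closed (shift_reduct E' E t)"
  unfolding shift_reduct_def closed_def
  by (auto simp: lift_ctx_closed intro!: closed_at_subst closed_at_plug)

section \<open>Reduction\<close>

inductive red :: "trm \<Rightarrow> trm \<Rightarrow> bool" where
  beta: "is_value v \<Longrightarrow> red (App (Lam t) v) (subst t 0 v)"
| shift: "pure_ctx E \<Longrightarrow> red (Reset (plug E (Shift t))) (shift_reduct Hole E t)"
| reset: "is_value v \<Longrightarrow> red (Reset v) v"
| appL: "red s s' \<Longrightarrow> red (App s t) (App s' t)"
| appR: "is_value v \<Longrightarrow> red t t' \<Longrightarrow> red (App v t) (App v t')"
| resetC: "red s s' \<Longrightarrow> red (Reset s) (Reset s')"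

lemma red_plug: "red s s' \<Longrightarrow> eval_ctx F \<Longrightarrow> red (plug F s) (plug F s')"
  by (induction F) (auto intro: red.intros)

lemma step_plug: "step s s' \<Longrightarrow> eval_ctx G \<Longrightarrow> step (plug G s) (plug G s')"
proof (induction rule: step.induct)
  case (beta F v t)
  then show ?case using step.beta[of "ctx_comp G F" v t] by simp
next
  case (shift F E t)
  then show ?case using step.shift[of "ctx_comp G F" E t] by simp
next
  case (reset F v)
  then show ?case using step.reset[of "ctx_comp G F" v] by simp
qed

lemma steps_plug: "steps s s' \<Longrightarrow> eval_ctx F \<Longrightarrow> steps (plug F s) (plug F s')"
  by (induction rule: rtranclp_induct) (auto intro: rtranclp.rtrancl_into_rtrancl step_plug)

lemma step_iff_red: "step s s' \<longleftrightarrow> red s s'"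
proof
  show "step s s' \<Longrightarrow> red s s'"
    by (induction rule: step.induct)
      (auto intro!: red_plug intro: red.intros red.shift[unfolded shift_reduct_def, simplified])
  show "red s s' \<Longrightarrow> step s s'"
  proof (induction rule: red.induct)
    case (beta v t) then show ?case using step.beta[of Hole v t] by simp
  next
    case (shift E t) then show ?case using step.shift[of Hole E t] by (simp add: shift_reduct_def)
  next
    case (reset v) then show ?case using step.reset[of Hole v] by simp
  next
    case (appL s s' t) then show ?case using step_plug[of s s' "CAppL Hole t"] by simp
  next
    case (appR v t t') then show ?case using step_plug[of t t' "CAppR v Hole"] by simp
  next
    case (resetC s s') then show ?case using step_plug[of s s' "CReset Hole"] by simp
  qed
qed

lemma is_value_iff: "is_value v \<longleftrightarrow> (\<exists>b. v = Lam b)"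
  by (cases v) auto

lemma Lam_not_red [simp]: "\<not> red (Lam t) u"
  by (auto elim: red.cases)

lemma value_not_red: "is_value v \<Longrightarrow> \<not> red v u"
  by (cases v) auto

lemma plug_Shift_not_value: "pure_ctx E \<Longrightarrow> \<not> is_value (plug E (Shift t))"
  by (cases E) auto

lemma plug_Shift_not_red: "pure_ctx E \<Longrightarrow> \<not> red (plug E (Shift t)) u"
proof (induction E arbitrary: u)
  case (CAppR v E)
  then show ?case
    by (auto elim!: red.cases[of "App v (plug E (Shift t))"]
        dest: plug_Shift_not_value value_not_red)
next
  case (CAppL E s)
  then show ?case using plug_Shift_not_value[of E t]
    by (auto elim!: red.cases[of "App (plug E (Shift t)) s"])
qed (auto elim: red.cases)

lemma plug_Shift_inject:
  "pure_ctx E \<Longrightarrow> pure_ctx E' \<Longrightarrow> plug E (Shift t) = plug E' (Shift t') \<Longrightarrow> E = E' \<and> t = t'"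
proof (induction E arbitrary: E')
  case Hole then show ?case by (cases E') auto
next
  case (CAppR v E) then show ?case by (cases E') (auto dest: plug_Shift_not_value)
next
  case (CAppL E s) then show ?case by (cases E') (auto dest: plug_Shift_not_value)
qed simp

lemma red_deterministic: "red s u \<Longrightarrow> red s u' \<Longrightarrow> u = u'"
proof (induction arbitrary: u' rule: red.induct)
  case (shift E t)
  from shift.prems show ?case
    by (cases rule: red.cases)
      (use shift.hyps plug_Shift_inject plug_Shift_not_value plug_Shift_not_red in blast)+
next
  case (reset v)
  from reset.prems show ?case
    by (cases rule: red.cases) (use reset.hyps plug_Shift_not_value value_not_red in blast)+
next
  case (resetC s s')
  from resetC.prems show ?case
    by (cases rule: red.cases) (use resetC plug_Shift_not_red value_not_red in blast)+
qed (erule red.cases; use value_not_red in auto)+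

lemma stuck_plug_Shift: "pure_ctx E \<Longrightarrow> stuck (plug E (Shift t))"
  unfolding stuck_def step_iff_red using plug_Shift_not_red plug_Shift_not_value by blast

lemma red_progress:
  "closed_at 0 t \<Longrightarrow> is_value t \<or> (\<exists>E s. pure_ctx E \<and> t = plug E (Shift s)) \<or> (\<exists>t'. red t t')"
proof (induction t)
  case (App t1 t2)
  then have IH1: "is_value t1 \<or> (\<exists>E s. pure_ctx E \<and> t1 = plug E (Shift s)) \<or> (\<exists>t'. red t1 t')"
    and IH2: "is_value t2 \<or> (\<exists>E s. pure_ctx E \<and> t2 = plug E (Shift s)) \<or> (\<exists>t'. red t2 t')"
    by auto
  show ?case
  proof (cases "is_value t1")
    case True
    then obtain b where "t1 = Lam b" by (auto simp: is_value_iff)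
    with True IH2 show ?thesis
      by (metis red.appR red.beta plug.simps(2) pure_ctx.simps(2))
  next
    case False
    with IH1 show ?thesis
      by (metis red.appL plug.simps(3) pure_ctx.simps(3))
  qed
next
  case (Shift t)
  then show ?case by (metis plug.simps(1) pure_ctx.simps(1))
next
  case (Reset t)
  then show ?case using red.reset red.shift red.resetC by fastforce
qed simp_all

lemma stuck_iff_plug_Shift:
  "closed t \<Longrightarrow> stuck t \<longleftrightarrow> (\<exists>E s. pure_ctx E \<and> t = plug E (Shift s))"
  using red_progress[of t] stuck_plug_Shift unfolding stuck_def step_iff_red closed_def by blast

section \<open>The closures \<open>tilde\<close> and \<open>hat\<close>\<close>

lemma tilde_cl_refl: "tilde_cl R t t"
  by (induction t) (auto intro: tilde_cl.intros)

lemma tilde_cl_mono: "tilde_cl R s t \<Longrightarrow> R \<subseteq> S \<Longrightarrow> tilde_cl S s t"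
  by (induction rule: tilde_cl.induct) (auto intro: tilde_cl.intros)

lemma tilde_mono: "R \<subseteq> S \<Longrightarrow> tilde R \<subseteq> tilde S"
  unfolding tilde_def using tilde_cl_mono by auto

lemma tilde_cl_tilde: "tilde_cl (tilde R) s t \<Longrightarrow> tilde_cl R s t"
  by (induction rule: tilde_cl.induct) (auto intro: tilde_cl.intros simp: tilde_def)

lemma tilde_subset_tilde: "R \<subseteq> tilde S \<Longrightarrow> tilde R \<subseteq> tilde S"
  using tilde_mono[of R "tilde S"] tilde_cl_tilde[of S] by (auto simp: tilde_def)

lemma tilde_cl_converse: "tilde_cl (R\<inverse>) t s \<longleftrightarrow> tilde_cl R s t"
proof -
  have conv: "tilde_cl R s t \<Longrightarrow> tilde_cl (R\<inverse>) t s" for R s t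
    by (induction rule: tilde_cl.induct) (auto intro: tilde_cl.intros)
  show ?thesis using conv[of R s t] conv[of "R\<inverse>" t s] by auto
qed

lemma tilde_converse: "tilde (R\<inverse>) = (tilde R)\<inverse>"
  unfolding tilde_def using tilde_cl_converse by auto

lemma subset_tilde: "R \<subseteq> Collect closed \<times> Collect closed \<Longrightarrow> R \<subseteq> tilde R"
  unfolding tilde_def by (auto intro: tilde_cl.base)

lemma tilde_cl_lift:
  "tilde_cl R s t \<Longrightarrow> R \<subseteq> Collect closed \<times> Collect closed \<Longrightarrow> tilde_cl R (lift k s) (lift k t)"
proof (induction arbitrary: k rule: tilde_cl.induct)
  case (base s t)
  then have "closed s" "closed t" by auto
  with base show ?case by (simp add: lift_closed tilde_cl.base)
qed (auto intro: tilde_cl.intros)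

lemma tilde_cl_subst:
  "tilde_cl R s t \<Longrightarrow> tilde_cl R a b \<Longrightarrow> R \<subseteq> Collect closed \<times> Collect closed \<Longrightarrow>
   tilde_cl R (subst s k a) (subst t k b)"
proof (induction arbitrary: k a b rule: tilde_cl.induct)
  case (base s t)
  then have "closed s" "closed t" by auto
  with base show ?case by (simp add: subst_closed tilde_cl.base)
next
  case lam then show ?case by (simp add: tilde_cl.lam tilde_cl_lift)
next
  case shift then show ?case by (simp add: tilde_cl.shift tilde_cl_lift)
qed (auto intro!: tilde_cl.app tilde_cl.reset intro: tilde_cl.var)

lemma hat_cl_mono: "hat_cl R F0 F1 \<Longrightarrow> tilde R \<subseteq> tilde S \<Longrightarrow> hat_cl S F0 F1"
  by (induction rule: hat_cl.induct) (auto intro: hat_cl.intros)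

lemma hat_subset_hat: "R \<subseteq> tilde S \<Longrightarrow> hat R \<subseteq> hat S"
  unfolding hat_def using hat_cl_mono tilde_subset_tilde by blast

lemma hat_cl_converse: "hat_cl (R\<inverse>) F1 F0 \<longleftrightarrow> hat_cl R F0 F1"
proof -
  have conv: "hat_cl R F0 F1 \<Longrightarrow> hat_cl (R\<inverse>) F1 F0" for R F0 F1
    by (induction rule: hat_cl.induct) (auto intro: hat_cl.intros simp: tilde_converse)
  show ?thesis using conv[of R F0 F1] conv[of "R\<inverse>" F1 F0] by auto
qed

lemma hat_converse: "hat (R\<inverse>) = (hat R)\<inverse>"
  unfolding hat_def using hat_cl_converse by auto

lemma hat_refl: "eval_ctx F \<Longrightarrow> closed_ctx F \<Longrightarrow> (F, F) \<in> hat R"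
proof -
  have "eval_ctx F \<Longrightarrow> closed_ctx F \<Longrightarrow> hat_cl R F F"
    by (induction F) (auto intro: hat_cl.intros simp: tilde_def tilde_cl_refl)
  then show "eval_ctx F \<Longrightarrow> closed_ctx F \<Longrightarrow> (F, F) \<in> hat R"
    by (simp add: hat_def)
qed

lemma hat_Hole [simp]: "(Hole, Hole) \<in> hat R"
  by (simp add: hat_def hat_cl.hole)

lemma hat_comp: "(F0, F1) \<in> hat R \<Longrightarrow> (G0, G1) \<in> hat R \<Longrightarrow> (ctx_comp F0 G0, ctx_comp F1 G1) \<in> hat R"
proof -
  have "hat_cl R F0 F1 \<Longrightarrow> hat_cl R G0 G1 \<Longrightarrow> hat_cl R (ctx_comp F0 G0) (ctx_comp F1 G1)"
    by (induction rule: hat_cl.induct) (auto intro: hat_cl.intros)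
  then show "(F0, F1) \<in> hat R \<Longrightarrow> (G0, G1) \<in> hat R \<Longrightarrow> ?thesis"
    by (simp add: hat_def)
qed

lemma hat_CAppL_Hole: "(u0, u1) \<in> tilde R \<Longrightarrow> (CAppL Hole u0, CAppL Hole u1) \<in> hat R"
  unfolding hat_def tilde_def by (auto intro!: hat_cl.intros simp: tilde_def)

lemma hat_CAppR_Hole:
  "(v0, v1) \<in> tilde R \<Longrightarrow> is_value v0 \<Longrightarrow> is_value v1 \<Longrightarrow> (CAppR v0 Hole, CAppR v1 Hole) \<in> hat R"
  unfolding hat_def tilde_def by (auto intro!: hat_cl.intros simp: tilde_def)

lemma hat_CReset_Hole: "(CReset Hole, CReset Hole) \<in> hat R"
  unfolding hat_def by (auto intro!: hat_cl.intros)

lemma tilde_cl_plug_lift: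
  "hat_cl R F0 F1 \<Longrightarrow> tilde_cl R s0 s1 \<Longrightarrow> R \<subseteq> Collect closed \<times> Collect closed \<Longrightarrow>
   tilde_cl R (plug (lift_ctx k F0) s0) (plug (lift_ctx k F1) s1)"
  by (induction rule: hat_cl.induct)
    (auto simp: tilde_def intro!: tilde_cl.app tilde_cl.reset tilde_cl_lift)

lemma tilde_plug: "(F0, F1) \<in> hat R \<Longrightarrow> (s0, s1) \<in> tilde R \<Longrightarrow> (plug F0 s0, plug F1 s1) \<in> tilde R"
proof -
  have "hat_cl R F0 F1 \<Longrightarrow> tilde_cl R s0 s1 \<Longrightarrow> tilde_cl R (plug F0 s0) (plug F1 s1)"
    by (induction rule: hat_cl.induct) (auto simp: tilde_def intro!: tilde_cl.app tilde_cl.reset)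
  then show "(F0, F1) \<in> hat R \<Longrightarrow> (s0, s1) \<in> tilde R \<Longrightarrow> ?thesis"
    unfolding hat_def tilde_def using closed_plug by auto
qed

lemma tilde_cl_shift_reduct:
  "R \<subseteq> Collect closed \<times> Collect closed \<Longrightarrow> tilde_cl R t0 t1 \<Longrightarrow> hat_cl R E0' E1' \<Longrightarrow>
   hat_cl R E0 E1 \<Longrightarrow> tilde_cl R (shift_reduct E0' E0 t0) (shift_reduct E1' E1 t1)"
  unfolding shift_reduct_def
  by (auto intro!: tilde_cl.reset tilde_cl.lam tilde_cl.var tilde_cl_subst tilde_cl_plug_lift)

section \<open>Environmental bisimulations\<close>

definition env_cond :: "elem set \<Rightarrow> (trm \<times> trm) set \<Rightarrow> bool" where
  "env_cond X \<E> \<longleftrightarrow>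
     (\<forall>t0 t1 v0 v1. (Lam t0, Lam t1) \<in> \<E> \<longrightarrow> is_value v0 \<longrightarrow> is_value v1 \<longrightarrow>
        (v0, v1) \<in> tilde \<E> \<longrightarrow> Tri \<E> (subst t0 0 v0) (subst t1 0 v1) \<in> X) \<and>
     (\<forall>E0 E1 t0 t1 E0' E1'. pure_ctx E0 \<longrightarrow> pure_ctx E1 \<longrightarrow>
        (plug E0 (Shift t0), plug E1 (Shift t1)) \<in> \<E> \<longrightarrow>
        pure_ctx E0' \<longrightarrow> pure_ctx E1' \<longrightarrow> (E0', E1') \<in> hat \<E> \<longrightarrow>
        Tri \<E> (shift_reduct E0' E0 t0) (shift_reduct E1' E1 t1) \<in> X)"

lemma env_bisim_iff:
  "env_bisim X \<longleftrightarrow> env_relation X \<and>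
     (\<forall>\<E> t0 t1. Tri \<E> t0 t1 \<in> X \<longrightarrow> prog_cond X \<E> t0 t1 \<and> prog_cond_rev X \<E> t0 t1) \<and>
     (\<forall>\<E>. Env \<E> \<in> X \<longrightarrow> env_cond X \<E>)"
  unfolding env_bisim_def env_cond_def shift_reduct_def ..

lemma prog_cond_mono: "prog_cond X \<E> t0 t1 \<Longrightarrow> X \<subseteq> Y \<Longrightarrow> prog_cond Y \<E> t0 t1"
  unfolding prog_cond_def by (meson subsetD)

lemma prog_cond_rev_mono: "prog_cond_rev X \<E> t0 t1 \<Longrightarrow> X \<subseteq> Y \<Longrightarrow> prog_cond_rev Y \<E> t0 t1"
  unfolding prog_cond_rev_def by (meson subsetD)

lemma env_cond_mono: "env_cond X \<E> \<Longrightarrow> X \<subseteq> Y \<Longrightarrow> env_cond Y \<E>"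
  unfolding env_cond_def by blast

lemma prog_cond_steps: "prog_cond X \<E> t0 t1' \<Longrightarrow> steps t1 t1' \<Longrightarrow> prog_cond X \<E> t0 t1"
  unfolding prog_cond_def by (meson rtranclp_trans)

lemma env_bisim_Union: "(\<And>X. X \<in> S \<Longrightarrow> env_bisim X) \<Longrightarrow> env_bisim (\<Union>S)"
  unfolding env_bisim_iff env_relation_def
  by (blast intro: prog_cond_mono prog_cond_rev_mono env_cond_mono)

lemma env_bisim_env_bisimilarity: "env_bisim env_bisimilarity"
  unfolding env_bisimilarity_def by (rule env_bisim_Union) simp

lemma env_bisim_subset_env_bisimilarity: "env_bisim X \<Longrightarrow> X \<subseteq> env_bisimilarity"
  unfolding env_bisimilarity_def by blast

lemma env_relation_env_bisimilarity: "env_relation env_bisimilarity"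
  using env_bisim_env_bisimilarity by (simp add: env_bisim_def)

lemma env_bisimilarity_Tri_closed:
  "Tri \<E> t0 t1 \<in> env_bisimilarity \<Longrightarrow> closed t0 \<and> closed t1"
  using env_relation_env_bisimilarity by (simp add: env_relation_def)

lemma env_bisimilarity_Env_is_env: "Env \<E> \<in> env_bisimilarity \<Longrightarrow> is_env \<E>"
  using env_relation_env_bisimilarity by (simp add: env_relation_def)

lemma env_bisimilarity_prog_cond:
  "Tri \<E> t0 t1 \<in> env_bisimilarity \<Longrightarrow> prog_cond env_bisimilarity \<E> t0 t1"
  using env_bisim_env_bisimilarity by (simp add: env_bisim_def)

lemma env_bisimilarity_env_cond: "Env \<E> \<in> env_bisimilarity \<Longrightarrow> env_cond env_bisimilarity \<E>"
  using env_bisim_env_bisimilarity by (simp add: env_bisim_iff)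

fun swap_elem :: "elem \<Rightarrow> elem" where
  "swap_elem (Env \<E>) = Env (\<E>\<inverse>)"
| "swap_elem (Tri \<E> t0 t1) = Tri (\<E>\<inverse>) t1 t0"

lemma swap_elem_swap_elem [simp]: "swap_elem (swap_elem e) = e"
  by (cases e) auto

lemma swap_elem_mem_image: "e \<in> swap_elem ` X \<longleftrightarrow> swap_elem e \<in> X"
  by (metis swap_elem_swap_elem image_iff)

lemma is_env_converse: "is_env (\<E>\<inverse>) \<longleftrightarrow> is_env \<E>"
  unfolding is_env_def by auto

lemma env_relation_swap: "env_relation (swap_elem ` X) \<longleftrightarrow> env_relation X"
  unfolding env_relation_def swap_elem_mem_image
  by (metis (no_types, lifting) converse_converse is_env_converse swap_elem.simps)

lemma converse_insert_Pair [simp]: "(insert (a, b) R)\<inverse> = insert (b, a) (R\<inverse>)"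
  by auto

lemma prog_cond_rev_swap: "prog_cond_rev X \<E> t0 t1 \<longleftrightarrow> prog_cond (swap_elem ` X) (\<E>\<inverse>) t1 t0"
  unfolding prog_cond_def prog_cond_rev_def swap_elem_mem_image by simp

lemma env_cond_swap: "env_cond (swap_elem ` X) \<E> \<longleftrightarrow> env_cond X (\<E>\<inverse>)"
  unfolding env_cond_def swap_elem_mem_image by (auto simp: tilde_converse hat_converse)

lemma swap_elem_image_image [simp]: "swap_elem ` swap_elem ` X = X"
  by (simp add: image_image)

lemma env_bisim_swap:
  assumes "env_bisim X"
  shows "env_bisim (swap_elem ` X)"
  unfolding env_bisim_iff env_relation_swap
proof (intro conjI allI impI)
  show "env_relation X" using assms by (simp add: env_bisim_def)
next
  fix \<E> t0 t1
  assume "Tri \<E> t0 t1 \<in> swap_elem ` X"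
  then have "Tri (\<E>\<inverse>) t1 t0 \<in> X" by (simp add: swap_elem_mem_image)
  then have "prog_cond X (\<E>\<inverse>) t1 t0" "prog_cond_rev X (\<E>\<inverse>) t1 t0"
    using assms by (simp_all add: env_bisim_def)
  then show "prog_cond (swap_elem ` X) \<E> t0 t1" "prog_cond_rev (swap_elem ` X) \<E> t0 t1"
    by (simp_all add: prog_cond_rev_swap)
next
  fix \<E>
  assume "Env \<E> \<in> swap_elem ` X"
  then have "Env (\<E>\<inverse>) \<in> X" by (simp add: swap_elem_mem_image)
  then show "env_cond (swap_elem ` X) \<E>"
    using assms by (simp add: env_bisim_iff env_cond_swap)
qed

lemma env_bisimilarity_swap: "e \<in> env_bisimilarity \<Longrightarrow> swap_elem e \<in> env_bisimilarity"
  using env_bisim_subset_env_bisimilarity[OF env_bisim_swap[OF env_bisim_env_bisimilarity]]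
  by blast

text \<open>For a swap-closed relation, (1d) is (1a)-(1c) for the swapped triple.\<close>
lemma env_bisim_if_swap_closed:
  assumes "env_relation X"
    and swap: "\<And>e. e \<in> X \<Longrightarrow> swap_elem e \<in> X"
    and "\<And>\<E> t0 t1. Tri \<E> t0 t1 \<in> X \<Longrightarrow> prog_cond X \<E> t0 t1"
    and "\<And>\<E>. Env \<E> \<in> X \<Longrightarrow> env_cond X \<E>"
  shows "env_bisim X"
proof -
  have "swap_elem ` X \<subseteq> X" using swap by blast
  then have "swap_elem ` X = X"
    by (metis image_mono subset_antisym swap_elem_image_image)
  then have "prog_cond_rev X \<E> t0 t1" if "Tri \<E> t0 t1 \<in> X" for \<E> t0 t1
    using assms(3) swap[OF that] by (simp add: prog_cond_rev_swap)
  with assms show ?thesis by (simp add: env_bisim_iff)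
qed

section \<open>Bisimilarity up to evaluation contexts\<close>

lemma is_env_closed: "is_env \<E> \<Longrightarrow> \<E> \<subseteq> Collect closed \<times> Collect closed"
  unfolding is_env_def by auto

lemma is_env_subset_tilde: "is_env \<E> \<Longrightarrow> \<E> \<subseteq> tilde \<E>"
  by (rule subset_tilde[OF is_env_closed])

lemma is_env_not_red: "is_env \<E> \<Longrightarrow> (u0, u1) \<in> \<E> \<Longrightarrow> \<not> red u0 u"
  unfolding is_env_def normal_form_def stuck_def step_iff_red using value_not_red by blast

lemma tilde_cl_value: "is_env \<E> \<Longrightarrow> tilde_cl \<E> u0 u1 \<Longrightarrow> is_value u0 \<Longrightarrow> is_value u1"
  by (erule tilde_cl.cases) (auto simp: is_env_def)

lemma is_env_insert:
  "is_env \<E> \<Longrightarrow> closed u0 \<Longrightarrow> closed u1 \<Longrightarrow> is_value u0 \<and> is_value u1 \<or> stuck u0 \<and> stuck u1 \<Longrightarrow>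
   is_env (insert (u0, u1) \<E>)"
  unfolding is_env_def normal_form_def stuck_def by auto

definition ctx_bisimilar :: "(trm \<times> trm) set \<Rightarrow> trm \<Rightarrow> trm \<Rightarrow> bool" where
  "ctx_bisimilar \<E> u0 u1 \<longleftrightarrow>
     (\<exists>F0 F1 s0 s1. (F0, F1) \<in> hat \<E> \<and> Tri \<E> s0 s1 \<in> env_bisimilarity \<and>
        u0 = plug F0 s0 \<and> u1 = plug F1 s1) \<or>
     (u0, u1) \<in> tilde \<E>"

lemma ctx_bisimilar_if_bisimilar: "Tri \<E> s0 s1 \<in> env_bisimilarity \<Longrightarrow> ctx_bisimilar \<E> s0 s1"
  unfolding ctx_bisimilar_def by (metis hat_Hole plug.simps(1))

lemma ctx_bisimilar_plug:
  assumes "ctx_bisimilar \<E> u0 u1" and "(G0, G1) \<in> hat \<E>"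
  shows "ctx_bisimilar \<E> (plug G0 u0) (plug G1 u1)"
  using assms tilde_plug hat_comp unfolding ctx_bisimilar_def by (metis plug_ctx_comp)

definition shift_bisimilar :: "(trm \<times> trm) set \<Rightarrow> ctx \<Rightarrow> trm \<Rightarrow> ctx \<Rightarrow> trm \<Rightarrow> bool" where
  "shift_bisimilar \<E> E0 t0 E1 t1 \<longleftrightarrow>
     (\<forall>E0' E1'. pure_ctx E0' \<longrightarrow> pure_ctx E1' \<longrightarrow> (E0', E1') \<in> hat \<E> \<longrightarrow>
        ctx_bisimilar \<E> (shift_reduct E0' E0 t0) (shift_reduct E1' E1 t1))"

lemma shift_bisimilar_comp:
  assumes "shift_bisimilar \<E> E0 t0 E1 t1" and "(G0, G1) \<in> hat \<E>" and "pure_ctx G0" "pure_ctx G1"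
  shows "shift_bisimilar \<E> (ctx_comp G0 E0) t0 (ctx_comp G1 E1) t1"
  using assms hat_comp unfolding shift_bisimilar_def by (simp add: shift_reduct_comp)

lemma shift_bisimilar_if_env:
  assumes "Env \<E> \<in> env_bisimilarity" and "(plug E0 (Shift t0), s1) \<in> \<E>" and "pure_ctx E0"
  obtains E1 t1 where "pure_ctx E1" "s1 = plug E1 (Shift t1)" "shift_bisimilar \<E> E0 t0 E1 t1"
proof -
  have "is_env \<E>" using assms(1) by (rule env_bisimilarity_Env_is_env)
  moreover have "stuck (plug E0 (Shift t0))" using assms(3) by (rule stuck_plug_Shift)
  ultimately obtain E1 t1 where E1: "pure_ctx E1" "s1 = plug E1 (Shift t1)"
    using assms(2) stuck_iff_plug_Shift unfolding is_env_def by blast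
  have "shift_bisimilar \<E> E0 t0 E1 t1"
    using env_bisimilarity_env_cond[OF assms(1)] assms(2,3) E1 ctx_bisimilar_if_bisimilar
    unfolding env_cond_def shift_bisimilar_def by blast
  with E1 show thesis by (rule that)
qed

lemma shift_bisimilar_if_tilde:
  assumes "is_env \<E>" and "tilde_cl \<E> t0 t1" and "closed (Shift t0)" "closed (Shift t1)"
  shows "shift_bisimilar \<E> Hole t0 Hole t1"
  unfolding shift_bisimilar_def ctx_bisimilar_def tilde_def
proof (intro allI impI disjI2 CollectI case_prodI conjI)
  fix E0' E1' assume E': "pure_ctx E0'" "pure_ctx E1'" "(E0', E1') \<in> hat \<E>"
  show "tilde_cl \<E> (shift_reduct E0' Hole t0) (shift_reduct E1' Hole t1)"
    using assms(2) E'(3)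
    by (auto simp: hat_def intro!: tilde_cl_shift_reduct is_env_closed[OF assms(1)] hat_cl.hole)
  show "closed (shift_reduct E0' Hole t0)" "closed (shift_reduct E1' Hole t1)"
    using assms(3,4) E'(3) closed_shift_reduct[of t0 E0' Hole] closed_shift_reduct[of t1 E1' Hole]
    by (auto simp: hat_def closed_def)
qed

lemma tilde_Shift_match:
  assumes "Env \<E> \<in> env_bisimilarity"
    and "tilde_cl \<E> (Shift t0) s1" "closed (Shift t0)" "closed s1"
  shows "\<exists>E1 t1. pure_ctx E1 \<and> s1 = plug E1 (Shift t1) \<and> shift_bisimilar \<E> Hole t0 E1 t1"
  using assms(2)
proof (cases rule: tilde_cl.cases)
  case base
  then show ?thesis
    using shift_bisimilar_if_env[OF assms(1), of Hole t0] by (metis plug.simps(1) pure_ctx.simps(1))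
next
  case (shift t1)
  then have "shift_bisimilar \<E> Hole t0 Hole t1"
    using assms(3,4) shift_bisimilar_if_tilde[OF env_bisimilarity_Env_is_env[OF assms(1)]] by auto
  with shift show ?thesis by (intro exI[of _ Hole] exI[of _ t1]) simp
qed

lemma tilde_stuck_match:
  assumes "Env \<E> \<in> env_bisimilarity"
    and "tilde_cl \<E> (plug E0 (Shift t0)) s1" "closed (plug E0 (Shift t0))" "closed s1" "pure_ctx E0"
  shows "\<exists>E1 t1. pure_ctx E1 \<and> s1 = plug E1 (Shift t1) \<and> shift_bisimilar \<E> E0 t0 E1 t1"
proof -
  have env: "is_env \<E>" using assms(1) by (rule env_bisimilarity_Env_is_env)
  note from_env = shift_bisimilar_if_env[OF assms(1)]
  from assms(2-) show ?thesis
  proof (induction E0 arbitrary: s1)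
    case Hole
    then show ?case using tilde_Shift_match[OF assms(1)] by simp
  next
    case (CAppL E0 u0)
    from CAppL.prems(1) show ?case
    proof (cases rule: tilde_cl.cases)
      case base then show ?thesis using from_env CAppL.prems(4) by metis
    next
      case (app _ a1 _ u1)
      then obtain E1 t1
        where E1: "pure_ctx E1" "a1 = plug E1 (Shift t1)" "shift_bisimilar \<E> E0 t0 E1 t1"
        using CAppL.IH[of a1] CAppL.prems by (auto simp: closed_def)
      have "(CAppL Hole u0, CAppL Hole u1) \<in> hat \<E>"
        using app CAppL.prems by (auto simp: closed_def tilde_def intro: hat_CAppL_Hole)
      with E1 have "shift_bisimilar \<E> (CAppL E0 u0) t0 (CAppL E1 u1) t1"
        using shift_bisimilar_comp[of \<E> E0 t0 E1 t1 "CAppL Hole u0" "CAppL Hole u1"] by simp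
      with E1 app show ?thesis by (intro exI[of _ "CAppL E1 u1"] exI[of _ t1]) simp
    qed simp_all
  next
    case (CAppR v0 E0)
    from CAppR.prems(1) show ?case
    proof (cases rule: tilde_cl.cases)
      case base then show ?thesis using from_env CAppR.prems(4) by metis
    next
      case (app _ v1 _ a1)
      then obtain E1 t1
        where E1: "pure_ctx E1" "a1 = plug E1 (Shift t1)" "shift_bisimilar \<E> E0 t0 E1 t1"
        using CAppR.IH[of a1] CAppR.prems by (auto simp: closed_def)
      have v: "is_value v0" "is_value v1" using CAppR.prems(4) tilde_cl_value[OF env] app by auto
      then have "(CAppR v0 Hole, CAppR v1 Hole) \<in> hat \<E>"
        using app CAppR.prems by (auto simp: closed_def tilde_def intro: hat_CAppR_Hole)
      with E1 v have "shift_bisimilar \<E> (CAppR v0 E0) t0 (CAppR v1 E1) t1"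
        using shift_bisimilar_comp[of \<E> E0 t0 E1 t1 "CAppR v0 Hole" "CAppR v1 Hole"] by simp
      with E1 app v show ?thesis by (intro exI[of _ "CAppR v1 E1"] exI[of _ t1]) simp
    qed simp_all
  qed simp
qed

lemma tilde_Lam_subst:
  assumes "Env \<E> \<in> env_bisimilarity"
    and "tilde_cl \<E> (Lam b0) (Lam b1)" "tilde_cl \<E> w0 w1" "is_value w0"
    and "closed (Lam b0)" "closed (Lam b1)" "closed w0" "closed w1"
  shows "ctx_bisimilar \<E> (subst b0 0 w0) (subst b1 0 w1)"
proof -
  have env: "is_env \<E>" using assms(1) by (rule env_bisimilarity_Env_is_env)
  have w: "(w0, w1) \<in> tilde \<E>" "is_value w1"
    using assms(3,4,7,8) tilde_cl_value[OF env] by (auto simp: tilde_def)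
  from assms(2) show ?thesis
  proof (cases rule: tilde_cl.cases)
    case base
    then have "Tri \<E> (subst b0 0 w0) (subst b1 0 w1) \<in> env_bisimilarity"
      using env_bisimilarity_env_cond[OF assms(1)] assms(4) w unfolding env_cond_def by blast
    then show ?thesis by (rule ctx_bisimilar_if_bisimilar)
  next
    case lam
    then have "tilde_cl \<E> (subst b0 0 w0) (subst b1 0 w1)"
      using tilde_cl_subst[OF _ assms(3) is_env_closed[OF env]] by simp
    moreover have "closed (subst b0 0 w0)" "closed (subst b1 0 w1)"
      using assms(5-8) by (auto simp: closed_def intro!: closed_at_subst)
    ultimately show ?thesis unfolding ctx_bisimilar_def tilde_def by blast
  qed
qed

lemma steps_ctx_bisimilar_plug:
  assumes "steps u1 u1'" "ctx_bisimilar \<E> u0 u1'" and "(G0, G1) \<in> hat \<E>"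
  shows "\<exists>u1''. steps (plug G1 u1) u1'' \<and> ctx_bisimilar \<E> (plug G0 u0) u1''"
  using steps_plug[OF assms(1)] ctx_bisimilar_plug[OF assms(2,3)] assms(3) by (auto simp: hat_def)

lemma tilde_beta_match:
  assumes "Env \<E> \<in> env_bisimilarity"
    and "tilde_cl \<E> (Lam b0) s1" "tilde_cl \<E> w0 w1" "is_value w0"
    and "closed (Lam b0)" "closed s1" "closed w0" "closed w1"
  shows "\<exists>u1. steps (App s1 w1) u1 \<and> ctx_bisimilar \<E> (subst b0 0 w0) u1"
proof -
  have env: "is_env \<E>" using assms(1) by (rule env_bisimilarity_Env_is_env)
  obtain b1 where b1: "s1 = Lam b1"
    using tilde_cl_value[OF env assms(2)] by (auto simp: is_value_iff)
  have "is_value w1" using tilde_cl_value[OF env assms(3,4)] .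
  then have "steps (App s1 w1) (subst b1 0 w1)" using b1 red.beta step_iff_red by blast
  moreover have "ctx_bisimilar \<E> (subst b0 0 w0) (subst b1 0 w1)"
    using tilde_Lam_subst[OF assms(1)] assms(2-) b1 by simp
  ultimately show ?thesis by blast
qed

lemma tilde_shift_match:
  assumes "Env \<E> \<in> env_bisimilarity"
    and "tilde_cl \<E> (plug E0 (Shift t0)) s1" "closed (plug E0 (Shift t0))" "closed s1" "pure_ctx E0"
  shows "\<exists>u1. steps (Reset s1) u1 \<and> ctx_bisimilar \<E> (shift_reduct Hole E0 t0) u1"
proof -
  obtain E1 t1 where E1: "pure_ctx E1" "s1 = plug E1 (Shift t1)" "shift_bisimilar \<E> E0 t0 E1 t1"
    using tilde_stuck_match[OF assms] by blast
  then have "steps (Reset s1) (shift_reduct Hole E1 t1)"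
    using red.shift[of E1 t1] step_iff_red by blast
  with E1(3) show ?thesis unfolding shift_bisimilar_def by fastforce
qed

lemma tilde_red_match:
  assumes "Env \<E> \<in> env_bisimilarity"
    and "tilde_cl \<E> u0 u1" "closed u0" "closed u1" "red u0 u0'"
  shows "\<exists>u1'. steps u1 u1' \<and> ctx_bisimilar \<E> u0' u1'"
proof -
  have env: "is_env \<E>" using assms(1) by (rule env_bisimilarity_Env_is_env)
  from assms(2-) show ?thesis
  proof (induction arbitrary: u0' rule: tilde_cl.induct)
    case (base s t) then show ?case using is_env_not_red[OF env] by blast
  next
    case (var n) then show ?case by (simp add: closed_def)
  next
    case (shift s t) then show ?case using plug_Shift_not_red[of Hole s] by auto
  next
    case (app s0 s1 w0 w1)
    have closed: "closed s0" "closed s1" "closed w0" "closed w1"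
      using app.prems by (auto simp: closed_def)
    have w: "(w0, w1) \<in> tilde \<E>" using app.hyps(2) closed by (simp add: tilde_def)
    from app.prems(3) show ?case
    proof (cases rule: red.cases)
      case beta
      then show ?thesis using tilde_beta_match[OF assms(1)] app.hyps closed by simp
    next
      case (appL s0')
      then show ?thesis
        using app.IH(1) closed steps_ctx_bisimilar_plug[OF _ _ hat_CAppL_Hole[OF w]] by fastforce
    next
      case (appR w0')
      have "is_value s1" using tilde_cl_value[OF env app.hyps(1)] appR by blast
      then have "(CAppR s0 Hole, CAppR s1 Hole) \<in> hat \<E>"
        using hat_CAppR_Hole app.hyps(1) closed appR by (simp add: tilde_def)
      then show ?thesis using appR app.IH(2) closed steps_ctx_bisimilar_plug by fastforce
    qed
  next
    case (reset s0 s1)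
    have closed: "closed s0" "closed s1" using reset.prems by (auto simp: closed_def)
    from reset.prems(3) show ?case
    proof (cases rule: red.cases)
      case shift
      then show ?thesis using tilde_shift_match[OF assms(1)] reset.hyps(1) closed by blast
    next
      case reset
      have "is_value s1" using tilde_cl_value[OF env reset.hyps(1)] reset by blast
      then have "steps (Reset s1) s1" using red.reset step_iff_red by blast
      moreover have "ctx_bisimilar \<E> s0 s1"
        using reset.hyps closed by (simp add: ctx_bisimilar_def tilde_def)
      ultimately show ?thesis using reset by auto
    next
      case resetC
      then show ?thesis
        using reset.IH closed steps_ctx_bisimilar_plug[OF _ _ hat_CReset_Hole] by fastforce
    qed
  qed (use value_not_red in auto)
qed

text \<open>Clauses (1b) and (1c) extend \<open>\<E>\<close> by pairs related by \<open>tilde \<E>'\<close>; hence \<open>\<E>\<close> ranges over all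
  environments inside \<open>tilde \<E>'\<close>.\<close>
inductive_set bisim_ctx_closure :: "elem set" where
  plug: "is_env \<E> \<Longrightarrow> \<E> \<subseteq> tilde \<E>' \<Longrightarrow> Tri \<E>' s0 s1 \<in> env_bisimilarity \<Longrightarrow> (F0, F1) \<in> hat \<E>' \<Longrightarrow>
    Tri \<E> (plug F0 s0) (plug F1 s1) \<in> bisim_ctx_closure"
| tilde: "is_env \<E> \<Longrightarrow> \<E> \<subseteq> tilde \<E>' \<Longrightarrow> Env \<E>' \<in> env_bisimilarity \<Longrightarrow> (u0, u1) \<in> tilde \<E>' \<Longrightarrow>
    Tri \<E> u0 u1 \<in> bisim_ctx_closure"
| env: "is_env \<E> \<Longrightarrow> \<E> \<subseteq> tilde \<E>' \<Longrightarrow> Env \<E>' \<in> env_bisimilarity \<Longrightarrow>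
    Env \<E> \<in> bisim_ctx_closure"

lemma bisim_ctx_closure_if_ctx_bisimilar:
  "ctx_bisimilar \<E>' u0 u1 \<Longrightarrow> Env \<E>' \<in> env_bisimilarity \<Longrightarrow> is_env \<E> \<Longrightarrow> \<E> \<subseteq> tilde \<E>' \<Longrightarrow>
   Tri \<E> u0 u1 \<in> bisim_ctx_closure"
  unfolding ctx_bisimilar_def using bisim_ctx_closure.plug bisim_ctx_closure.tilde by blast

lemma tilde_prog_cond:
  assumes "Env \<E>' \<in> env_bisimilarity" and "(u0, u1) \<in> tilde \<E>'"
    and "is_env \<E>" and "\<E> \<subseteq> tilde \<E>'"
  shows "prog_cond bisim_ctx_closure \<E> u0 u1"
  unfolding prog_cond_def
proof (intro conjI allI impI)
  have env': "is_env \<E>'" using assms(1) by (rule env_bisimilarity_Env_is_env)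
  have u: "tilde_cl \<E>' u0 u1" "closed u0" "closed u1" using assms(2) by (auto simp: tilde_def)
  have extend: "Env (insert (u0, u1) \<E>) \<in> bisim_ctx_closure"
    if "is_value u0 \<and> is_value u1 \<or> stuck u0 \<and> stuck u1"
    using bisim_ctx_closure.env[OF is_env_insert[OF assms(3) u(2,3) that] _ assms(1)] assms(2,4)
    by blast
  show "\<exists>u1'. steps u1 u1' \<and> Tri \<E> u0' u1' \<in> bisim_ctx_closure" if "step u0 u0'" for u0'
    using tilde_red_match[OF assms(1) u] that bisim_ctx_closure_if_ctx_bisimilar[OF _ assms(1,3,4)]
    by (metis step_iff_red)
  show "\<exists>v1. steps u1 v1 \<and> is_value v1 \<and> Env (\<E> \<union> {(u0, v1)}) \<in> bisim_ctx_closure"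
    if "is_value u0"
    using that tilde_cl_value[OF env' u(1)] extend by auto
  show "\<exists>u1'. steps u1 u1' \<and> stuck u1' \<and> Env (\<E> \<union> {(u0, u1')}) \<in> bisim_ctx_closure"
    if stuck: "stuck u0"
  proof -
    obtain E0 t0 where "pure_ctx E0" "u0 = plug E0 (Shift t0)"
      using stuck stuck_iff_plug_Shift u(2) by blast
    then have "stuck u1"
      using tilde_stuck_match[OF assms(1)] u stuck_plug_Shift by metis
    with stuck extend show ?thesis by auto
  qed
qed

lemma plug_prog_cond:
  assumes "is_env \<E>" and "\<E> \<subseteq> tilde \<E>'"
    and s: "Tri \<E>' s0 s1 \<in> env_bisimilarity" and F: "(F0, F1) \<in> hat \<E>'"
  shows "prog_cond bisim_ctx_closure \<E> (plug F0 s0) (plug F1 s1)"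
proof (cases "normal_form s0")
  case True
  then obtain r1 where r1: "steps s1 r1" and bisim: "Env (insert (s0, r1) \<E>') \<in> env_bisimilarity"
    using env_bisimilarity_prog_cond[OF s] unfolding normal_form_def prog_cond_def by auto
  define \<E>'' where "\<E>'' = insert (s0, r1) \<E>'"
  have \<E>'': "Env \<E>'' \<in> env_bisimilarity" using bisim by (simp add: \<E>''_def)
  have "\<E>'' \<subseteq> tilde \<E>''" using is_env_subset_tilde env_bisimilarity_Env_is_env \<E>'' by blast
  then have sub: "\<E>' \<subseteq> tilde \<E>''" and "(s0, r1) \<in> tilde \<E>''" by (auto simp: \<E>''_def)
  then have "(plug F0 s0, plug F1 r1) \<in> tilde \<E>''"
    using tilde_plug hat_subset_hat[OF sub] F by blast
  moreover have "\<E> \<subseteq> tilde \<E>''" using assms(2) tilde_subset_tilde[OF sub] by blast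
  ultimately have "prog_cond bisim_ctx_closure \<E> (plug F0 s0) (plug F1 r1)"
    using tilde_prog_cond[OF \<E>''] assms(1) by blast
  moreover have "steps (plug F1 s1) (plug F1 r1)" using steps_plug[OF r1] F by (simp add: hat_def)
  ultimately show ?thesis by (rule prog_cond_steps)
next
  case False
  then obtain s0' where s0': "red s0 s0'" unfolding normal_form_def stuck_def step_iff_red by blast
  have ev: "eval_ctx F0" "eval_ctx F1" using F by (auto simp: hat_def)
  have red: "red (plug F0 s0) (plug F0 s0')" using red_plug[OF s0' ev(1)] .
  show ?thesis
    unfolding prog_cond_def
  proof (intro conjI allI impI)
    fix u assume "step (plug F0 s0) u"
    then have u: "u = plug F0 s0'" using red_deterministic red step_iff_red by blast
    obtain s1' where "steps s1 s1'" "Tri \<E>' s0' s1' \<in> env_bisimilarity"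
      using env_bisimilarity_prog_cond[OF s] s0' step_iff_red unfolding prog_cond_def by blast
    then show "\<exists>u1. steps (plug F1 s1) u1 \<and> Tri \<E> u u1 \<in> bisim_ctx_closure"
      using u bisim_ctx_closure.plug[OF assms(1,2) _ F] steps_plug[OF _ ev(2)] by blast
  qed (use red value_not_red step_iff_red in \<open>auto simp: stuck_def\<close>)
qed

lemma bisim_ctx_closure_prog_cond:
  "Tri \<E> u0 u1 \<in> bisim_ctx_closure \<Longrightarrow> prog_cond bisim_ctx_closure \<E> u0 u1"
  by (erule bisim_ctx_closure.cases) (auto intro: plug_prog_cond tilde_prog_cond)

lemma env_relation_bisim_ctx_closure: "env_relation bisim_ctx_closure"
  unfolding env_relation_def
proof (rule conjI; intro allI impI)
  show "is_env \<E>" if "Env \<E> \<in> bisim_ctx_closure" for \<E>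
    using that by (cases rule: bisim_ctx_closure.cases) auto
next
  show "is_env \<E> \<and> closed t0 \<and> closed t1" if "Tri \<E> t0 t1 \<in> bisim_ctx_closure" for \<E> t0 t1
    using that
    by (cases rule: bisim_ctx_closure.cases)
      (auto simp: hat_def tilde_def dest: env_bisimilarity_Tri_closed intro: closed_plug)
qed

lemma bisim_ctx_closure_swap: "e \<in> bisim_ctx_closure \<Longrightarrow> swap_elem e \<in> bisim_ctx_closure"
proof (induction rule: bisim_ctx_closure.induct)
  case (plug \<E> \<E>' s0 s1 F0 F1)
  then show ?case
    using bisim_ctx_closure.plug[of "\<E>\<inverse>" "\<E>'\<inverse>" s1 s0 F1 F0]
      env_bisimilarity_swap[of "Tri \<E>' s0 s1"]
    by (auto simp: is_env_converse tilde_converse hat_converse)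
next
  case (tilde \<E> \<E>' u0 u1)
  then show ?case
    using bisim_ctx_closure.tilde[of "\<E>\<inverse>" "\<E>'\<inverse>" u1 u0] env_bisimilarity_swap[of "Env \<E>'"]
    by (auto simp: is_env_converse tilde_converse)
next
  case (env \<E> \<E>')
  then show ?case
    using bisim_ctx_closure.env[of "\<E>\<inverse>" "\<E>'\<inverse>"] env_bisimilarity_swap[of "Env \<E>'"]
    by (auto simp: is_env_converse tilde_converse)
qed

lemma bisim_ctx_closure_env_cond:
  assumes "Env \<E> \<in> bisim_ctx_closure"
  shows "env_cond bisim_ctx_closure \<E>"
  using assms
proof (cases rule: bisim_ctx_closure.cases)
  case (env \<E>')
  have closed_tilde: "tilde_cl \<E>' u0 u1" "closed u0" "closed u1" if "(u0, u1) \<in> \<E>" for u0 u1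
    using that env(2) by (auto simp: tilde_def)
  have Lam: "Tri \<E> (subst t0 0 v0) (subst t1 0 v1) \<in> bisim_ctx_closure"
    if "(Lam t0, Lam t1) \<in> \<E>" "is_value v0" "(v0, v1) \<in> tilde \<E>" for t0 t1 v0 v1
  proof -
    have "(v0, v1) \<in> tilde \<E>'" using that(3) tilde_subset_tilde[OF env(2)] by blast
    then have "ctx_bisimilar \<E>' (subst t0 0 v0) (subst t1 0 v1)"
      using tilde_Lam_subst[OF env(3)] closed_tilde[OF that(1)] that(2) by (auto simp: tilde_def)
    then show ?thesis using bisim_ctx_closure_if_ctx_bisimilar env by blast
  qed
  have Shift: "Tri \<E> (shift_reduct E0' E0 t0) (shift_reduct E1' E1 t1) \<in> bisim_ctx_closure"
    if E: "pure_ctx E0" "pure_ctx E1" "(plug E0 (Shift t0), plug E1 (Shift t1)) \<in> \<E>"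
      and E': "pure_ctx E0'" "pure_ctx E1'" "(E0', E1') \<in> hat \<E>" for E0 E1 t0 t1 E0' E1'
  proof -
    obtain E1'' t1'' where "pure_ctx E1''" "plug E1 (Shift t1) = plug E1'' (Shift t1'')"
      and "shift_bisimilar \<E>' E0 t0 E1'' t1''"
      using tilde_stuck_match[OF env(3)] closed_tilde[OF E(3)] E(1) by blast
    then have "shift_bisimilar \<E>' E0 t0 E1 t1" using plug_Shift_inject E(2) by metis
    moreover have "(E0', E1') \<in> hat \<E>'" using hat_subset_hat[OF env(2)] E'(3) by blast
    ultimately have "ctx_bisimilar \<E>' (shift_reduct E0' E0 t0) (shift_reduct E1' E1 t1)"
      using E'(1,2) unfolding shift_bisimilar_def by blast
    then show ?thesis using bisim_ctx_closure_if_ctx_bisimilar env by blast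
  qed
  show ?thesis unfolding env_cond_def using Lam Shift by blast
qed

lemma env_bisim_bisim_ctx_closure: "env_bisim bisim_ctx_closure"
  by (rule env_bisim_if_swap_closed[OF env_relation_bisim_ctx_closure bisim_ctx_closure_swap
        bisim_ctx_closure_prog_cond bisim_ctx_closure_env_cond])

theorem lemma8:
  assumes "is_env \<E>"
    and "closed t0" and "closed t1"
    and "approx_in \<E> t0 t1"
    and "eval_ctx F" and "closed_ctx F"
  shows "approx_in \<E> (plug F t0) (plug F t1)"
proof -
  have "Tri \<E> (plug F t0) (plug F t1) \<in> bisim_ctx_closure"
  proof (rule bisim_ctx_closure.plug)
    show "is_env \<E>" by fact
    show "\<E> \<subseteq> tilde \<E>" using assms(1) by (rule is_env_subset_tilde)
    show "Tri \<E> t0 t1 \<in> env_bisimilarity" using assms(4) by (simp add: approx_in_def)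
    show "(F, F) \<in> hat \<E>" using hat_refl assms(5,6) .
  qed
  then show ?thesis
    using env_bisim_subset_env_bisimilarity[OF env_bisim_bisim_ctx_closure]
    by (auto simp: approx_in_def)
qed

end
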